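(* Let $S$ be a finite semigroup satisfying the quasi-identities $$\forall a\,\forall b\,\forall \alpha\,\forall\beta\ \big((a\alpha=a\beta)\to(b\alpha=b\beta)\big),\qquad \forall a\,\forall b\,\forall \alpha\,\forall\beta\ \big((\alpha a=\beta a)\to(\alpha b=\beta b)\big).$$ Then $\mathrm{Ker}(S)=\mathrm{Red}(S)$, i.e. the kernel of $S$ is exactly the set of reducible elements of $S$.
   Context: The kernel $\mathrm{Ker}(S)$ of a finite semigroup $S$ is its (unique) minimal two-sided ideal. An element $s\in S$ is reducible if $s=ab$ for some $a,b\in S$; $\mathrm{Red}(S)$ is the set of reducible elements. *)

theory Defs
  imports Main
begin

definition two_sided_ideal :: "'a::semigroup_mult set \<Rightarrow> bool" where
  "two_sided_ideal I \<longleftrightarrow> I \<noteq> {} \<and> (\<forall>x\<in>I. \<forall>s. s * x \<in> I \<and> x * s \<in> I)"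

definition minimal_ideal :: "'a::semigroup_mult set \<Rightarrow> bool" where
  "minimal_ideal I \<longleftrightarrow> two_sided_ideal I \<and> (\<forall>J. two_sided_ideal J \<and> J \<subseteq> I \<longrightarrow> J = I)"

definition Ker :: "'a::semigroup_mult set" where
  "Ker = (THE I. minimal_ideal I)"

definition Red :: "'a::semigroup_mult set" where
  "Red = {s. \<exists>a b. s = a * b}"

end

theory Submission
  imports Defs
begin

text \<open>
  The reducible elements always form an ideal, so it suffices to show that they lie in every
  ideal \<open>J\<close>. Given \<open>a * b\<close> and \<open>k \<in> J\<close>, finiteness yields powers \<open>u\<close>, \<open>y\<close> of \<open>k\<close> with
  \<open>u * y = y\<close>; the second quasi-identity turns \<open>(a * u) * y = a * y\<close> into
  \<open>a * u * b = a * b\<close>, which lies in \<open>J\<close> because \<open>u\<close> does.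
\<close>

text \<open>\<open>spow k n\<close> is \<open>k ^ (n + 1)\<close>: without a unit there is no zeroth power.\<close>
primrec spow :: "'a::semigroup_mult \<Rightarrow> nat \<Rightarrow> 'a" where
  "spow k 0 = k"
| "spow k (Suc n) = k * spow k n"

lemma spow_add: "spow k (m + n + 1) = spow k m * spow k n"
  by (induction m) (simp_all add: mult.assoc)

lemma spow_mem_ideal: "two_sided_ideal J \<Longrightarrow> k \<in> J \<Longrightarrow> spow k n \<in> J"
  by (induction n) (auto simp: two_sided_ideal_def)

lemma finite_ex_spow_left_neutral:
  fixes k :: "'a::{finite,semigroup_mult}"
  obtains m n where "spow k m * spow k n = spow k n"
proof -
  have "\<not> inj (spow k)"
    using finite_imageD[of "spow k" UNIV] by auto
  then obtain i j where "spow k i = spow k j" "i < j"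
    unfolding inj_def by (metis linorder_neqE_nat)
  moreover have "spow k j = spow k (j - i - 1) * spow k i"
    using \<open>i < j\<close> spow_add[of k "j - i - 1" i] by simp
  ultimately have "spow k (j - i - 1) * spow k i = spow k i"
    by simp
  then show thesis
    by (rule that)
qed

lemma two_sided_ideal_Red: "two_sided_ideal Red"
  unfolding two_sided_ideal_def Red_def by blast

lemma two_sided_ideal_Int:
  assumes I: "two_sided_ideal I" and J: "two_sided_ideal J"
  shows "two_sided_ideal (I \<inter> J)"
proof -
  obtain i j where "i \<in> I" "j \<in> J"
    using I J unfolding two_sided_ideal_def by blast
  then have "i * j \<in> I \<inter> J"
    using I J unfolding two_sided_ideal_def by blast
  then show ?thesis
    using I J unfolding two_sided_ideal_def by blast
qed

lemma minimal_ideal_unique: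
  assumes I: "minimal_ideal I" and J: "minimal_ideal J"
  shows "I = J"
proof -
  have "two_sided_ideal (I \<inter> J)"
    using I J unfolding minimal_ideal_def by (blast intro: two_sided_ideal_Int)
  then have "I \<inter> J = I" and "I \<inter> J = J"
    using I J unfolding minimal_ideal_def by blast+
  then show ?thesis
    by simp
qed

lemma Ker_eqI:
  fixes I :: "'a::semigroup_mult set"
  assumes "minimal_ideal I"
  shows "Ker = I"
  unfolding Ker_def
proof (rule the_equality)
  fix J :: "'a set" assume "minimal_ideal J"
  then show "J = I"
    using assms by (rule minimal_ideal_unique)
qed (fact assms)

lemma Red_subset_ideal:
  fixes J :: "'a::{finite,semigroup_mult} set"
  assumes right: "\<And>(a::'a) b \<alpha> \<beta>. \<alpha> * a = \<beta> * a \<Longrightarrow> \<alpha> * b = \<beta> * b"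
    and J: "two_sided_ideal J"
  shows "Red \<subseteq> J"
proof
  fix x :: 'a assume "x \<in> Red"
  then obtain a b where x: "x = a * b"
    unfolding Red_def by blast
  from J obtain k where "k \<in> J"
    unfolding two_sided_ideal_def by blast
  obtain m n where neutral: "spow k m * spow k n = spow k n"
    using finite_ex_spow_left_neutral .
  have "(a * spow k m) * spow k n = a * spow k n"
    by (simp add: mult.assoc neutral)
  then have "a * spow k m * b = x"
    unfolding x by (rule right)
  moreover have "a * spow k m \<in> J"
    using spow_mem_ideal[OF J \<open>k \<in> J\<close>] J unfolding two_sided_ideal_def by blast
  ultimately show "x \<in> J"
    using J unfolding two_sided_ideal_def by blast
qed

theorem lemma3:
  assumes left: "\<And>(a::'a::{finite,semigroup_mult}) b \<alpha> \<beta>. a * \<alpha> = a * \<beta> \<Longrightarrow> b * \<alpha> = b * \<beta>"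
    and right: "\<And>(a::'a) b \<alpha> \<beta>. \<alpha> * a = \<beta> * a \<Longrightarrow> \<alpha> * b = \<beta> * b"
  shows "(Ker :: 'a set) = Red"
proof -
  have "Red \<subseteq> J" if "two_sided_ideal J" for J :: "'a set"
    using right that by (rule Red_subset_ideal)
  then have "minimal_ideal (Red :: 'a set)"
    unfolding minimal_ideal_def using two_sided_ideal_Red by blast
  then show ?thesis
    by (rule Ker_eqI)
qed

end
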